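(* Let $(\Sigma_+,\Sigma_-,N_1,N_2,N_3)$ be a solution of the Wainwright–Hsu system satisfying the constraint, with $N_1=0$, $N_2,N_3>0$, and $\Sigma_-^2+(N_2-N_3)^2>0$. Then there is $n_0\in(0,\infty)$ such that $\lim_{\tau\to\infty}N_2(\tau)=\lim_{\tau\to\infty}N_3(\tau)=n_0$.
   Context: Wainwright–Hsu system: for functions $N_1,N_2,N_3,\Sigma_+,\Sigma_-$ of $\tau\in\mathbb{R}$ (prime denotes $d/d\tau$), $N_1'=(q-4\Sigma_+)N_1$, $N_2'=(q+2\Sigma_++2\sqrt3\Sigma_-)N_2$, $N_3'=(q+2\Sigma_+-2\sqrt3\Sigma_-)N_3$, $\Sigma_+'=-(2-q)\Sigma_+-3S_+$, $\Sigma_-'=-(2-q)\Sigma_--3S_-$, where $q=2(\Sigma_+^2+\Sigma_-^2)$, $S_+=\frac12[(N_2-N_3)^2-N_1(2N_1-N_2-N_3)]$, $S_-=\frac{\sqrt3}{2}(N_3-N_2)(N_1-N_2-N_3)$, together with the constraint $\Sigma_+^2+\Sigma_-^2+\frac34[N_1^2+N_2^2+N_3^2-2(N_1N_2+N_2N_3+N_1N_3)]=1$. Solutions exist for all $\tau\in\mathbb{R}$; the condition $\Sigma_-^2+(N_2-N_3)^2>0$ is preserved by the flow. *)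

theory Defs
  imports "HOL-Analysis.Analysis"
begin

definition wh_q :: "real \<Rightarrow> real \<Rightarrow> real" where
  "wh_q sp sm = 2 * (sp^2 + sm^2)"

definition wh_Splus :: "real \<Rightarrow> real \<Rightarrow> real \<Rightarrow> real" where
  "wh_Splus n1 n2 n3 = (1/2) * ((n2 - n3)^2 - n1 * (2*n1 - n2 - n3))"

definition wh_Sminus :: "real \<Rightarrow> real \<Rightarrow> real \<Rightarrow> real" where
  "wh_Sminus n1 n2 n3 = (sqrt 3 / 2) * (n3 - n2) * (n1 - n2 - n3)"

definition WH_solution ::
  "(real \<Rightarrow> real) \<Rightarrow> (real \<Rightarrow> real) \<Rightarrow> (real \<Rightarrow> real) \<Rightarrow> (real \<Rightarrow> real) \<Rightarrow> (real \<Rightarrow> real) \<Rightarrow> bool" where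
  "WH_solution N1 N2 N3 Sp Sm \<longleftrightarrow> (\<forall>t::real.
     let q = wh_q (Sp t) (Sm t);
         SP = wh_Splus (N1 t) (N2 t) (N3 t);
         SM = wh_Sminus (N1 t) (N2 t) (N3 t) in
     (N1 has_real_derivative ((q - 4 * Sp t) * N1 t)) (at t) \<and>
     (N2 has_real_derivative ((q + 2 * Sp t + 2 * sqrt 3 * Sm t) * N2 t)) (at t) \<and>
     (N3 has_real_derivative ((q + 2 * Sp t - 2 * sqrt 3 * Sm t) * N3 t)) (at t) \<and>
     (Sp has_real_derivative (- (2 - q) * Sp t - 3 * SP)) (at t) \<and>
     (Sm has_real_derivative (- (2 - q) * Sm t - 3 * SM)) (at t) \<and>
     (Sp t)^2 + (Sm t)^2 + (3/4) * ((N1 t)^2 + (N2 t)^2 + (N3 t)^2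
        - 2 * (N1 t * N2 t + N2 t * N3 t + N1 t * N3 t)) = 1)"

end

(* Write D = N2 - N3 and S = N2 + N3. On N1 = 0 the constraint reads
   Sp^2 + Sm^2 + 3/4 D^2 = 1, so Sp' = -3/2 D^2 (1 + Sp) <= 0, and
   M = ln (N2 N3) - Sm D / (sqrt 3 S) is nondecreasing. Hence N2 N3 stays bounded below,
   which eventually forces S^2 >= 4/3 (1 + Sp); from then on
   G = (1 + Sm D / (2 sqrt 3 S)) / (1 + Sp), which is comparable to 1 / (1 + Sp),
   grows at least linearly. So 1 + Sp -> 0, and with it Sm -> 0 and D -> 0.
   Since M' = O((1 + Sp)^2) = O(1 / G^2) while G' is bounded below, M + K / G is eventually
   nonincreasing for a suitable K, so M is bounded, hence convergent. Then ln (N2 N3)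
   converges and N2, N3 tend to a common positive limit. *)

theory Submission
  imports Defs
begin

lemma wh_constraint_bounds:
  fixes x y D :: real
  assumes "x^2 + y^2 + 3/4 * D^2 = 1"
  shows "y^2 \<le> 2 * (1 + x)" "D^2 \<le> 8/3 * (1 + x)" "\<bar>x\<bar> \<le> 1"
proof -
  have "x^2 \<le> 1" using assms zero_le_power2[of y] zero_le_power2[of D] by linarith
  then show "\<bar>x\<bar> \<le> 1" by (simp add: abs_square_le_1)
  have "2 * (1 + x) - y^2 = (1 + x)^2 + 3/4 * D^2"
    using assms by (simp add: power2_eq_square algebra_simps)
  then show "y^2 \<le> 2 * (1 + x)"
    using zero_le_power2[of "1 + x"] zero_le_power2[of D] by linarith
  have "8/3 * (1 + x) - D^2 = 4/3 * (1 + x)^2 + 4/3 * y^2"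
    using assms by (simp add: power2_eq_square algebra_simps)
  then show "D^2 \<le> 8/3 * (1 + x)"
    using zero_le_power2[of "1 + x"] zero_le_power2[of y] by linarith
qed

text \<open>\<open>M_rate\<close> and \<open>G_rate\<close> are the derivatives of the functions \<open>M\<close> and \<open>G\<close>
  defined in the locale below, written in the variables \<open>x = Sp\<close>, \<open>y = Sm\<close>,
  \<open>D = N2 - N3\<close>, \<open>S = N2 + N3\<close>.\<close>

definition M_rate :: "real \<Rightarrow> real \<Rightarrow> real \<Rightarrow> real \<Rightarrow> real" where
  "M_rate x y D S = 4 * (1 + x) - 3/2 * D^2 - 2 * y^2 + sqrt 3 / 2 * y * D^3 / S + 2 * y^2 * D^2 / S^2"

lemma M_rate_eq:
  fixes x y D S :: real
  assumes "x^2 + y^2 + 3/4 * D^2 = 1" and "S \<noteq> 0"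
  shows "M_rate x y D S = 2 * (1 + x)^2 + sqrt 3 / 2 * (y * D / S) * D^2 + 2 * (y * D / S)^2"
proof -
  have "M_rate x y D S = (4 * (1 + x) - 3/2 * D^2 - 2 * y^2)
      + sqrt 3 / 2 * (y * D / S) * D^2 + 2 * (y * D / S)^2"
    unfolding M_rate_def using assms(2) by (simp add: power2_eq_square power3_eq_cube field_simps)
  also have "4 * (1 + x) - 3/2 * D^2 - 2 * y^2 = 2 * (1 + x)^2"
    using assms(1) by (simp add: power2_eq_square algebra_simps)
  finally show ?thesis .
qed

lemma M_rate_nonneg:
  fixes x y D S :: real
  assumes "x^2 + y^2 + 3/4 * D^2 = 1" and "S \<noteq> 0"
  shows "0 \<le> M_rate x y D S"
proof -
  define w where "w = y * D / S"
  have "(D^2)^2 \<le> (8/3 * (1 + x))^2"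
    using wh_constraint_bounds(2)[OF assms(1)] by (rule power_mono) simp
  also have "\<dots> = 64/9 * (1 + x)^2" by (simp add: power2_eq_square algebra_simps)
  finally have D4: "3/32 * (D^2)^2 \<le> 2/3 * (1 + x)^2" by simp
  have "sqrt 3 / 2 * w * D^2 + 2 * w^2 = 2 * (w + sqrt 3 / 8 * D^2)^2 - 3/32 * (D^2)^2"
    by (simp add: power2_eq_square algebra_simps)
  moreover have "0 \<le> (w + sqrt 3 / 8 * D^2)^2" "0 \<le> (1 + x)^2" by simp_all
  ultimately show ?thesis
    unfolding M_rate_eq[OF assms] w_def[symmetric] using D4 by linarith
qed

lemma M_rate_le:
  fixes x y D S :: real
  assumes "x^2 + y^2 + 3/4 * D^2 = 1" and "S \<noteq> 0"
  shows "M_rate x y D S \<le> (6 + 16 / S^2) * (1 + x)^2"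
proof -
  define w where "w = y * D / S"
  define R where "R = (1 + x)^2"
  note bounds = wh_constraint_bounds[OF assms(1)]
  have "0 \<le> 1 + x" using bounds(3) by (simp add: abs_le_iff)
  have "y^2 * D^2 \<le> (2 * (1 + x)) * (8/3 * (1 + x))"
    using bounds \<open>0 \<le> 1 + x\<close> by (intro mult_mono) auto
  also have "\<dots> = 16/3 * R" unfolding R_def by (simp add: power2_eq_square algebra_simps)
  finally have "y^2 * D^2 / S^2 \<le> 16/3 * R / S^2" by (rule divide_right_mono) simp
  then have w2: "w^2 \<le> 16/3 * (R / S^2)" unfolding w_def by (simp add: power_divide power_mult_distrib)
  have "(D^2)^2 \<le> (8/3 * (1 + x))^2"
    using bounds(2) by (rule power_mono) simp
  then have D4: "(D^2)^2 \<le> 64/9 * R" unfolding R_def by (simp add: power2_eq_square algebra_simps)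
  have "0 \<le> R" "0 \<le> R / S^2" unfolding R_def by simp_all
  have "sqrt 3 \<le> 2" by (rule real_le_lsqrt) simp_all
  have "\<bar>sqrt 3 / 2 * w\<bar> = sqrt 3 / 2 * \<bar>w\<bar>" by (simp add: abs_mult)
  also have "\<dots> \<le> \<bar>w\<bar>" using \<open>sqrt 3 \<le> 2\<close> by (intro mult_left_le_one_le) auto
  finally have "sqrt 3 / 2 * w \<le> \<bar>w\<bar>" by linarith
  then have "sqrt 3 / 2 * w * D^2 \<le> \<bar>w\<bar> * D^2" by (intro mult_right_mono) auto
  also have "\<bar>w\<bar> * D^2 \<le> w^2 / 2 + (D^2)^2 / 2"
    using sum_squares_bound[of "\<bar>w\<bar>" "D^2"] by (simp add: power2_eq_square)
  finally have cross: "sqrt 3 / 2 * w * D^2 \<le> w^2 / 2 + (D^2)^2 / 2" .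
  have "M_rate x y D S = 2 * R + sqrt 3 / 2 * w * D^2 + 2 * w^2"
    unfolding M_rate_eq[OF assms] w_def R_def ..
  also have "\<dots> \<le> 6 * R + 16 * (R / S^2)"
    using cross w2 D4 \<open>0 \<le> R\<close> \<open>0 \<le> R / S^2\<close> by linarith
  also have "\<dots> = (6 + 16 / S^2) * (1 + x)^2" unfolding R_def by (simp add: algebra_simps)
  finally show ?thesis .
qed

definition G_rate :: "real \<Rightarrow> real \<Rightarrow> real \<Rightarrow> real \<Rightarrow> real" where
  "G_rate x y D S = (y^2 + 3/4 * D^2) / (1 + x) - y^2 * D^2 / (S^2 * (1 + x))"

lemma G_rate_ge:
  fixes x y D S :: real
  assumes "x^2 + y^2 + 3/4 * D^2 = 1" and "0 < 1 + x" and "4/3 * (1 + x) \<le> S^2"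
  shows "(1 - x) / 2 \<le> G_rate x y D S"
proof -
  define r where "r = 1 + x"
  have "0 < r" using assms(2) unfolding r_def .
  have "r \<le> 2" using wh_constraint_bounds(3)[OF assms(1)] unfolding r_def by linarith
  have sum: "y^2 + 3/4 * D^2 = (1 - x) * r"
    using assms(1) unfolding r_def by (simp add: power2_eq_square algebra_simps)
  have "3 * (y^2 * D^2) \<le> (y^2 + 3/4 * D^2)^2"
    using zero_le_power2[of "y^2 - 3/4 * D^2"] by (simp add: power2_eq_square algebra_simps)
  then have "y^2 * D^2 \<le> (1 - x) * ((1 - x) * r^2) / 3"
    unfolding sum by (simp add: power2_eq_square mult_ac)
  also have "\<dots> \<le> 2 * ((1 - x) * r^2) / 3"
    using \<open>r \<le> 2\<close> \<open>0 < r\<close> unfolding r_def by (intro divide_right_mono mult_right_mono) auto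
  also have "\<dots> = (1 - x) / 2 * (r * (4/3 * r))" by (simp add: power2_eq_square)
  also have "\<dots> \<le> (1 - x) / 2 * (S^2 * r)"
    using assms(3) \<open>0 < r\<close> \<open>r \<le> 2\<close> unfolding r_def
    by (intro mult_left_mono) (auto simp: mult.commute)
  moreover have "0 < S^2 * r"
  proof -
    have "0 < 4/3 * (1 + x)" using assms(2) by simp
    then have "0 < S^2" using assms(3) by (rule less_le_trans)
    then show ?thesis using \<open>0 < r\<close> by simp
  qed
  ultimately have "y^2 * D^2 / (S^2 * r) \<le> (1 - x) / 2" by (simp add: pos_divide_le_eq)
  have "(1 - x) / 2 = (1 - x) - (1 - x) / 2" by (simp add: field_simps)
  also have "\<dots> \<le> (1 - x) - y^2 * D^2 / (S^2 * r)"
    using \<open>y^2 * D^2 / (S^2 * r) \<le> (1 - x) / 2\<close> by simp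
  also have "(1 - x) - y^2 * D^2 / (S^2 * r) = G_rate x y D S"
    unfolding G_rate_def r_def[symmetric] sum using \<open>0 < r\<close> by simp
  finally show ?thesis .
qed

lemma deriv_ge_imp_linear_lower_bound:
  fixes f f' :: "real \<Rightarrow> real"
  assumes deriv: "\<And>s. (f has_real_derivative f' s) (at s)"
    and ge: "\<And>s. a \<le> s \<Longrightarrow> c \<le> f' s" and "a \<le> t"
  shows "f a + c * (t - a) \<le> f t"
proof -
  have "f a - c * a \<le> f t - c * t"
  proof (rule DERIV_nonneg_imp_nondecreasing[OF \<open>a \<le> t\<close>])
    fix s assume "a \<le> s" "s \<le> t"
    have "((\<lambda>s. f s - c * s) has_real_derivative f' s - c) (at s)"
      using deriv[of s] by (auto intro!: derivative_eq_intros)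
    then show "\<exists>y. ((\<lambda>s. f s - c * s) has_real_derivative y) (at s) \<and> 0 \<le> y"
      using ge[OF \<open>a \<le> s\<close>] by auto
  qed
  then show ?thesis by (simp add: algebra_simps)
qed

lemma deriv_le_imp_linear_upper_bound:
  fixes f f' :: "real \<Rightarrow> real"
  assumes "\<And>s. (f has_real_derivative f' s) (at s)"
    and "\<And>s. a \<le> s \<Longrightarrow> f' s \<le> c" and "a \<le> t"
  shows "f t \<le> f a + c * (t - a)"
proof -
  have "- f a + (- c) * (t - a) \<le> - f t"
    using assms by (intro deriv_ge_imp_linear_lower_bound[where f' = "\<lambda>s. - f' s"])
      (auto intro: DERIV_minus)
  then show ?thesis by simp
qed

lemma mono_bdd_above_tendsto_SUP:
  fixes f :: "real \<Rightarrow> real"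
  assumes "mono f" and "bdd_above (range f)"
  shows "(f \<longlongrightarrow> (SUP t. f t)) at_top"
proof (rule increasing_tendsto)
  show "\<forall>\<^sub>F t in at_top. f t \<le> (SUP t. f t)"
    using assms(2) by (intro always_eventually allI cSUP_upper) auto
next
  fix l assume "l < (SUP t. f t)"
  then obtain t0 where "l < f t0" using less_cSUP_iff[OF _ assms(2)] by auto
  then show "\<forall>\<^sub>F t in at_top. l < f t"
    unfolding eventually_at_top_linorder using assms(1) by (meson less_le_trans monoD)
qed

lemma tendsto_sqrt_of_product_and_difference:
  fixes a b :: "'a \<Rightarrow> real"
  assumes pos: "\<And>t. 0 < a t" "\<And>t. 0 < b t"
    and prod: "((\<lambda>t. a t * b t) \<longlongrightarrow> p) F" and diff: "((\<lambda>t. a t - b t) \<longlongrightarrow> 0) F"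
  shows "(a \<longlongrightarrow> sqrt p) F" "(b \<longlongrightarrow> sqrt p) F"
proof -
  have sum: "a t + b t = sqrt (4 * (a t * b t) + (a t - b t)^2)" for t
  proof -
    have "4 * (a t * b t) + (a t - b t)^2 = (a t + b t)^2"
      by (simp add: power2_eq_square algebra_simps)
    then show ?thesis using pos[of t] by simp
  qed
  have "((\<lambda>t. a t + b t) \<longlongrightarrow> sqrt (4 * p + 0^2)) F"
    unfolding sum by (intro tendsto_intros prod diff)
  then have S: "((\<lambda>t. a t + b t) \<longlongrightarrow> 2 * sqrt p) F" by (simp add: real_sqrt_mult)
  have "((\<lambda>t. ((a t + b t) + (a t - b t)) / 2) \<longlongrightarrow> (2 * sqrt p + 0) / 2) F"
    by (intro tendsto_intros S diff) simp
  then show "(a \<longlongrightarrow> sqrt p) F" by simp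
  have "((\<lambda>t. ((a t + b t) - (a t - b t)) / 2) \<longlongrightarrow> (2 * sqrt p - 0) / 2) F"
    by (intro tendsto_intros S diff) simp
  then show "(b \<longlongrightarrow> sqrt p) F" by simp
qed

lemma deriv_ge_pos_imp_filterlim_at_top:
  fixes f f' :: "real \<Rightarrow> real"
  assumes deriv: "\<And>s. (f has_real_derivative f' s) (at s)"
    and ge: "\<And>s. a \<le> s \<Longrightarrow> c \<le> f' s" and "0 < c"
  shows "filterlim f at_top at_top"
proof (rule filterlim_at_top_mono)
  show "filterlim (\<lambda>t. (f a - c * a) + c * t) at_top at_top"
    by (rule filterlim_tendsto_add_at_top[OF tendsto_const
        filterlim_tendsto_pos_mult_at_top[OF tendsto_const \<open>0 < c\<close> filterlim_ident]])
  show "\<forall>\<^sub>F t in at_top. f a - c * a + c * t \<le> f t"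
    using eventually_ge_at_top[of a]
  proof eventually_elim
    case (elim t)
    with deriv_ge_imp_linear_lower_bound[OF deriv ge elim] show ?case
      by (simp add: algebra_simps)
  qed
qed

text \<open>The Wainwright-Hsu system with \<open>N1 = 0\<close> (Bianchi type VII_0), with
  \<open>q = 2 - 3/2 (N2 - N3)\<^sup>2\<close> substituted from the constraint.\<close>

locale bianchi_VII0_solution =
  fixes N2 N3 Sp Sm :: "real \<Rightarrow> real"
  assumes N2_deriv: "\<And>t. (N2 has_real_derivative
      ((2 - 3/2 * (N2 t - N3 t)^2 + 2 * Sp t + 2 * sqrt 3 * Sm t) * N2 t)) (at t)"
    and N3_deriv: "\<And>t. (N3 has_real_derivative
      ((2 - 3/2 * (N2 t - N3 t)^2 + 2 * Sp t - 2 * sqrt 3 * Sm t) * N3 t)) (at t)"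
    and Sp_deriv: "\<And>t. (Sp has_real_derivative - 3/2 * (N2 t - N3 t)^2 * (1 + Sp t)) (at t)"
    and Sm_deriv: "\<And>t. (Sm has_real_derivative
      - 3/2 * (N2 t - N3 t)^2 * Sm t - 3 * sqrt 3 / 2 * (N2 t - N3 t) * (N2 t + N3 t)) (at t)"
    and N2_pos: "\<And>t. 0 < N2 t" and N3_pos: "\<And>t. 0 < N3 t"
    and constraint: "\<And>t. Sp t^2 + Sm t^2 + 3/4 * (N2 t - N3 t)^2 = 1"
    and nondegenerate: "\<And>t. 0 < Sm t^2 + (N2 t - N3 t)^2"
begin

abbreviation "N_diff t \<equiv> N2 t - N3 t"
abbreviation "N_sum t \<equiv> N2 t + N3 t"
abbreviation "N_ratio t \<equiv> N_diff t / N_sum t"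

lemma Sp_bounds: "-1 < Sp t" "Sp t < 1"
proof -
  have "Sp t^2 < 1"
    using constraint[of t] nondegenerate[of t] zero_le_power2[of "Sm t"]
      zero_le_power2[of "N_diff t"] by linarith
  then show "-1 < Sp t" "Sp t < 1" by (auto simp: abs_square_less_1 abs_less_iff)
qed

lemma one_plus_Sp_deriv:
  "((\<lambda>t. 1 + Sp t) has_real_derivative - 3/2 * N_diff t^2 * (1 + Sp t)) (at t)"
  using DERIV_add[OF DERIV_const Sp_deriv] by simp

lemma Sp_antimono:
  assumes "u \<le> v"
  shows "Sp v \<le> Sp u"
proof -
  have "- 3/2 * N_diff s^2 * (1 + Sp s) \<le> 0" for s
    using Sp_bounds(1)[of s] by (simp add: mult_nonneg_nonneg)
  then show ?thesis
    using deriv_le_imp_linear_upper_bound[OF Sp_deriv _ assms, of 0] by simp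
qed

lemma N_sum_pos: "0 < N_sum t"
  using N2_pos[of t] N3_pos[of t] by simp

lemma N_product_pos: "0 < N2 t * N3 t"
  using N2_pos[of t] N3_pos[of t] by simp

lemma N_sum_sq_ge: "4 * (N2 t * N3 t) \<le> N_sum t ^ 2"
  using zero_le_power2[of "N_diff t"] by (simp add: power2_eq_square algebra_simps)

definition W :: "real \<Rightarrow> real" where
  "W t = Sm t * N_ratio t"

lemma abs_W_le: "\<bar>W t\<bar> \<le> \<bar>Sm t\<bar>"
proof -
  have "\<bar>N_diff t\<bar> / N_sum t \<le> 1"
    using N2_pos[of t] N3_pos[of t] by simp
  then have "\<bar>Sm t\<bar> * (\<bar>N_diff t\<bar> / N_sum t) \<le> \<bar>Sm t\<bar>"
    by (rule mult_left_le) simp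
  then show ?thesis
    unfolding W_def using N_sum_pos[of t] by (simp add: abs_mult)
qed

lemma abs_W_le_one: "\<bar>W t\<bar> \<le> 1"
proof -
  have "Sm t^2 \<le> 1"
    using constraint[of t] zero_le_power2[of "Sp t"] zero_le_power2[of "N_diff t"] by linarith
  then show ?thesis using abs_W_le[of t] by (simp add: abs_square_le_1)
qed

lemma log_product_deriv:
  "((\<lambda>t. ln (N2 t * N3 t)) has_real_derivative 4 * (1 + Sp t) - 3 * N_diff t^2) (at t)"
proof -
  have "((\<lambda>t. ln (N2 t) + ln (N3 t)) has_real_derivative
      1 / N2 t * ((2 - 3/2 * (N2 t - N3 t)^2 + 2 * Sp t + 2 * sqrt 3 * Sm t) * N2 t)
    + 1 / N3 t * ((2 - 3/2 * (N2 t - N3 t)^2 + 2 * Sp t - 2 * sqrt 3 * Sm t) * N3 t)) (at t)"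
    by (intro DERIV_add DERIV_ln_divide[THEN DERIV_chain2] N2_deriv N3_deriv N2_pos N3_pos)
  moreover have "(\<lambda>t. ln (N2 t) + ln (N3 t)) = (\<lambda>t. ln (N2 t * N3 t))"
    by (simp add: fun_eq_iff ln_mult_pos N2_pos N3_pos)
  ultimately show ?thesis
    using N2_pos[of t] N3_pos[of t] by (simp add: algebra_simps)
qed

lemma N_ratio_deriv: "(N_ratio has_real_derivative 2 * sqrt 3 * Sm t * (1 - N_ratio t^2)) (at t)"
proof -
  define a where "a = 2 - 3/2 * N_diff t^2 + 2 * Sp t"
  define b where "b = 2 * sqrt 3 * Sm t"
  have "(N_diff has_real_derivative a * N_diff t + b * N_sum t) (at t)"
    by (rule DERIV_diff[OF N2_deriv N3_deriv, THEN DERIV_cong]) (simp add: a_def b_def field_simps)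
  moreover have "(N_sum has_real_derivative a * N_sum t + b * N_diff t) (at t)"
    by (rule DERIV_add[OF N2_deriv N3_deriv, THEN DERIV_cong]) (simp add: a_def b_def field_simps)
  moreover have simplified:
    "S \<noteq> 0 \<Longrightarrow> ((a * D + b * S) * S - D * (a * S + b * D)) / (S * S) = b * (1 - (D / S)^2)"
    for D S :: real
    by (simp add: field_simps power2_eq_square)
  ultimately show ?thesis
    unfolding b_def[symmetric] using N_sum_pos[of t]
    by (intro DERIV_cong[OF DERIV_divide simplified]) auto
qed

lemma W_deriv:
  "(W has_real_derivative
      (- 3/2 * N_diff t^2 * Sm t - 3 * sqrt 3 / 2 * N_diff t * N_sum t) * N_ratio t
    + 2 * sqrt 3 * Sm t * (1 - N_ratio t^2) * Sm t) (at t)"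
  unfolding W_def[abs_def] by (rule DERIV_mult[OF Sm_deriv N_ratio_deriv])

definition M :: "real \<Rightarrow> real" where
  "M t = ln (N2 t * N3 t) - W t / sqrt 3"

lemma M_deriv: "(M has_real_derivative M_rate (Sp t) (Sm t) (N_diff t) (N_sum t)) (at t)"
proof -
  have simplified: "S \<noteq> 0 \<Longrightarrow> 4 * (1 + x) - 3 * D^2
      - ((- 3/2 * D^2 * y - 3 * sqrt 3 / 2 * D * S) * (D / S) + 2 * sqrt 3 * y * (1 - (D / S)^2) * y)
        / sqrt 3
    = M_rate x y D S" for x y D S :: real
    by (simp add: M_rate_def field_simps power2_eq_square power3_eq_cube)
  show ?thesis
    unfolding M_def[abs_def] using N_sum_pos[of t]
    by (intro DERIV_cong[OF DERIV_diff simplified] DERIV_cdivide log_product_deriv W_deriv) auto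
qed

definition G :: "real \<Rightarrow> real" where
  "G t = (1 + W t / (2 * sqrt 3)) / (1 + Sp t)"

lemma G_deriv: "(G has_real_derivative G_rate (Sp t) (Sm t) (N_diff t) (N_sum t)) (at t)"
proof -
  have simplified: "S \<noteq> 0 \<Longrightarrow> r \<noteq> 0 \<Longrightarrow> s \<noteq> 0 \<Longrightarrow>
      ((0 + ((- 3/2 * D^2 * y - 3 * s / 2 * D * S) * (D / S)
        + 2 * s * y * (1 - (D / S)^2) * y) / (2 * s)) * r
      - (1 + y * (D / S) / (2 * s)) * (- 3/2 * D^2 * r)) / (r * r)
    = (y^2 + 3/4 * D^2) / r - y^2 * D^2 / (S^2 * r)" for r y D S s :: real
    by (simp add: field_simps power2_eq_square)
  have nonzero: "N_sum t \<noteq> 0" "1 + Sp t \<noteq> 0"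
    using N_sum_pos[of t] Sp_bounds(1)[of t] by auto
  show ?thesis
    unfolding G_def[abs_def] W_def G_rate_def
    by (rule DERIV_cong[OF DERIV_divide], rule DERIV_add DERIV_const, rule DERIV_const,
        rule DERIV_cdivide, rule W_deriv[unfolded W_def[abs_def]], rule one_plus_Sp_deriv)
      (fact nonzero, rule simplified, (fact nonzero)+, simp)
qed

lemma M_mono: "mono M"
proof (rule monoI)
  fix u v :: real assume "u \<le> v"
  have "0 \<le> M_rate (Sp s) (Sm s) (N_diff s) (N_sum s)" if "u \<le> s" for s
    by (rule M_rate_nonneg[OF constraint]) (use N_sum_pos[of s] in linarith)
  from deriv_ge_imp_linear_lower_bound[OF M_deriv this \<open>u \<le> v\<close>]
  show "M u \<le> M v" by simp
qed

lemma N_product_lower_bound: "\<exists>c>0. \<forall>t\<ge>0. c \<le> N2 t * N3 t"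
proof (intro exI conjI allI impI)
  fix t :: real assume "0 \<le> t"
  have "\<bar>W t / sqrt 3\<bar> \<le> 1"
    using abs_W_le_one[of t] by (simp add: abs_divide divide_le_eq order_trans[OF _ real_sqrt_ge_one])
  then have "M 0 - 1 \<le> ln (N2 t * N3 t)"
    using monoD[OF M_mono \<open>0 \<le> t\<close>] unfolding M_def by linarith
  then show "exp (M 0 - 1) \<le> N2 t * N3 t"
    using N_product_pos[of t] by (simp add: ln_ge_iff)
qed simp

lemma log_ratio_deriv:
  "((\<lambda>t. ln (N2 t * N3 t) - 2 * ln (1 + Sp t)) has_real_derivative 4 * (1 + Sp t)) (at t)"
proof -
  have "((\<lambda>t. ln (N2 t * N3 t) - 2 * ln (1 + Sp t)) has_real_derivative
      4 * (1 + Sp t) - 3 * N_diff t^2 - 2 * (1 / (1 + Sp t) * (- 3/2 * N_diff t^2 * (1 + Sp t)))) (at t)"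
    by (intro DERIV_diff DERIV_cmult log_product_deriv DERIV_ln_divide[THEN DERIV_chain2]
        one_plus_Sp_deriv) (use Sp_bounds(1)[of t] in simp)
  then show ?thesis using Sp_bounds(1)[of t] by simp
qed

lemma eventually_Sp_le_N_product_of_Sp_bounded_below:
  assumes "0 < e" and low: "\<And>t. 0 \<le> t \<Longrightarrow> e \<le> 1 + Sp t"
  shows "\<exists>T\<ge>0. \<forall>t\<ge>T. 1 + Sp t \<le> N2 t * N3 t"
proof -
  define Z where "Z t = ln (N2 t * N3 t) - 2 * ln (1 + Sp t)" for t
  have low4: "4 * e \<le> 4 * (1 + Sp t)" if "0 \<le> t" for t
    using low[OF that] by simp
  have Z_grow: "Z 0 + 4 * e * t \<le> Z t" if "0 \<le> t" for t
    using deriv_ge_imp_linear_lower_bound[OF log_ratio_deriv low4 that] unfolding Z_def by simp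
  define T where "T = max 0 ((- ln e - Z 0) / (4 * e))"
  have "1 + Sp t \<le> N2 t * N3 t" if "T \<le> t" for t
  proof -
    from that have "0 \<le> t" "- ln e - Z 0 \<le> t * (4 * e)"
      using \<open>0 < e\<close> unfolding T_def by (auto simp: divide_le_eq)
    then have "- ln e \<le> Z t" using Z_grow[of t] by (simp add: algebra_simps)
    then have "ln ((1 + Sp t)^2) \<le> ln (e * (N2 t * N3 t))"
      using \<open>0 < e\<close> N_product_pos[of t] Sp_bounds(1)[of t] unfolding Z_def
      by (simp add: ln_mult_pos ln_realpow)
    then have "(1 + Sp t)^2 \<le> e * (N2 t * N3 t)"
      using \<open>0 < e\<close> N_product_pos[of t] Sp_bounds(1)[of t] by simp
    moreover have "e * (1 + Sp t) \<le> (1 + Sp t)^2"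
      using low[OF \<open>0 \<le> t\<close>] Sp_bounds(1)[of t] by (simp add: power2_eq_square mult_right_mono)
    ultimately have "e * (1 + Sp t) \<le> e * (N2 t * N3 t)" by linarith
    then show ?thesis using \<open>0 < e\<close> by simp
  qed
  moreover have "0 \<le> T" unfolding T_def by simp
  ultimately show ?thesis by blast
qed

lemma eventually_Sp_le_N_product: "\<exists>T\<ge>0. \<forall>t\<ge>T. 1 + Sp t \<le> 3 * (N2 t * N3 t)"
proof -
  obtain c where "0 < c" and c: "\<And>t. 0 \<le> t \<Longrightarrow> c \<le> N2 t * N3 t"
    using N_product_lower_bound by auto
  show ?thesis
  proof (cases "\<exists>t0\<ge>0. 1 + Sp t0 < 3 * c")
    case True
    then obtain t0 where "0 \<le> t0" "1 + Sp t0 < 3 * c" by auto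
    have "1 + Sp t \<le> 3 * (N2 t * N3 t)" if "t0 \<le> t" for t
      using Sp_antimono[OF that] c[of t] \<open>0 \<le> t0\<close> \<open>1 + Sp t0 < 3 * c\<close> that by linarith
    then show ?thesis using \<open>0 \<le> t0\<close> by blast
  next
    case False
    then have "3 * c \<le> 1 + Sp t" if "0 \<le> t" for t
      using that by (meson not_less)
    then obtain T where "0 \<le> T" and T: "\<And>t. T \<le> t \<Longrightarrow> 1 + Sp t \<le> N2 t * N3 t"
      using eventually_Sp_le_N_product_of_Sp_bounded_below[of "3 * c"] \<open>0 < c\<close> by auto
    have "1 + Sp t \<le> 3 * (N2 t * N3 t)" if "T \<le> t" for t
      using T[OF that] N_product_pos[of t] by linarith
    then show ?thesis using \<open>0 \<le> T\<close> by blast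
  qed
qed

lemma G_bounds: "1/2 / (1 + Sp t) \<le> G t" "G t \<le> 3/2 / (1 + Sp t)"
proof -
  have "1 \<le> sqrt 3" by simp
  then have "\<bar>W t\<bar> \<le> sqrt 3" using abs_W_le_one[of t] by linarith
  then have W_small: "\<bar>W t / (2 * sqrt 3)\<bar> \<le> 1/2" by (simp add: abs_divide divide_le_eq)
  have "1/2 \<le> 1 + W t / (2 * sqrt 3)" using abs_le_D2[OF W_small] by linarith
  then show "1/2 / (1 + Sp t) \<le> G t"
    unfolding G_def by (rule divide_right_mono) (use Sp_bounds(1)[of t] in simp)
  have "1 + W t / (2 * sqrt 3) \<le> 3/2" using abs_le_D1[OF W_small] by linarith
  then show "G t \<le> 3/2 / (1 + Sp t)"
    unfolding G_def by (rule divide_right_mono) (use Sp_bounds(1)[of t] in simp)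
qed

lemma G_pos: "0 < G t"
  by (rule less_le_trans[OF _ G_bounds(1)]) (use Sp_bounds(1)[of t] in simp)

lemma eventually_G_rate_ge: "\<exists>T\<ge>0. \<exists>c>0. \<forall>t\<ge>T. c \<le> G_rate (Sp t) (Sm t) (N_diff t) (N_sum t)"
proof -
  obtain T where "0 \<le> T" and T: "\<And>t. T \<le> t \<Longrightarrow> 1 + Sp t \<le> 3 * (N2 t * N3 t)"
    using eventually_Sp_le_N_product by auto
  have "(1 - Sp 0) / 2 \<le> G_rate (Sp t) (Sm t) (N_diff t) (N_sum t)" if "T \<le> t" for t
  proof -
    have "4 * (1 + Sp t) \<le> 3 * (4 * (N2 t * N3 t))" using T[OF that] by simp
    also have "\<dots> \<le> 3 * N_sum t ^ 2" using N_sum_sq_ge[of t] by simp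
    finally
    have "4/3 * (1 + Sp t) \<le> N_sum t ^ 2" by simp
    then have "(1 - Sp t) / 2 \<le> G_rate (Sp t) (Sm t) (N_diff t) (N_sum t)"
      using G_rate_ge[OF constraint] Sp_bounds(1)[of t] by simp
    moreover have "Sp t \<le> Sp 0" using Sp_antimono \<open>0 \<le> T\<close> that by simp
    ultimately show ?thesis by (simp add: divide_right_mono)
  qed
  moreover have "0 < (1 - Sp 0) / 2" using Sp_bounds(2)[of 0] by simp
  ultimately show ?thesis using \<open>0 \<le> T\<close> by blast
qed

lemma one_plus_Sp_le: "1 + Sp t \<le> 3/2 / G t"
  using G_bounds(2)[of t] G_pos[of t] Sp_bounds(1)[of t] by (simp add: field_simps)

lemma one_plus_Sp_tendsto_0: "((\<lambda>t. 1 + Sp t) \<longlongrightarrow> 0) at_top"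
proof (rule tendsto_sandwich[of "\<lambda>_. 0" _ _ "\<lambda>t. 3/2 / G t"])
  have "0 \<le> 1 + Sp t" for t using Sp_bounds(1)[of t] by simp
  then show "\<forall>\<^sub>F t in at_top. 0 \<le> 1 + Sp t" by simp
  show "\<forall>\<^sub>F t in at_top. 1 + Sp t \<le> 3/2 / G t"
    using one_plus_Sp_le by (intro always_eventually allI)
  obtain T c where "0 < c" and "\<And>t. T \<le> t \<Longrightarrow> c \<le> G_rate (Sp t) (Sm t) (N_diff t) (N_sum t)"
    using eventually_G_rate_ge by auto
  then have "filterlim G at_top at_top"
    by (intro deriv_ge_pos_imp_filterlim_at_top[OF G_deriv])
  then show "((\<lambda>t. 3/2 / G t) \<longlongrightarrow> 0) at_top"
    by (intro tendsto_divide_0[OF tendsto_const] filterlim_at_top_imp_at_infinity)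
qed simp

lemma eventually_M_rate_le: "\<exists>C\<ge>0. \<forall>t\<ge>0. M_rate (Sp t) (Sm t) (N_diff t) (N_sum t) \<le> C * (1 + Sp t)^2"
proof -
  obtain c where "0 < c" and c: "\<And>t. 0 \<le> t \<Longrightarrow> c \<le> N2 t * N3 t"
    using N_product_lower_bound by auto
  have "M_rate (Sp t) (Sm t) (N_diff t) (N_sum t) \<le> (6 + 4 / c) * (1 + Sp t)^2" if "0 \<le> t" for t
  proof -
    have "4 * c \<le> N_sum t ^ 2" using c[OF that] N_sum_sq_ge[of t] by linarith
    moreover have "0 < 4 * c" using \<open>0 < c\<close> by simp
    ultimately have "16 / N_sum t ^ 2 \<le> 16 / (4 * c)"
      by (intro divide_left_mono) (auto intro: mult_pos_pos order.strict_trans2)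
    then have "(6 + 16 / N_sum t ^ 2) * (1 + Sp t)^2 \<le> (6 + 4 / c) * (1 + Sp t)^2"
      by (intro mult_right_mono) auto
    moreover have "N_sum t \<noteq> 0" using N_sum_pos[of t] by simp
    ultimately show ?thesis using M_rate_le[OF constraint] by (meson order_trans)
  qed
  moreover have "0 \<le> 6 + 4 / c" using \<open>0 < c\<close> by simp
  ultimately show ?thesis by blast
qed

lemma eventually_M_plus_K_div_G_antimono:
  "\<exists>T K. 0 \<le> K \<and> (\<forall>t\<ge>T. M t + K / G t \<le> M T + K / G T)"
proof -
  obtain T c where "0 \<le> T" "0 < c"
    and G_rate: "\<And>t. T \<le> t \<Longrightarrow> c \<le> G_rate (Sp t) (Sm t) (N_diff t) (N_sum t)"
    using eventually_G_rate_ge by auto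
  obtain C where "0 \<le> C"
    and M_rate: "\<And>t. 0 \<le> t \<Longrightarrow> M_rate (Sp t) (Sm t) (N_diff t) (N_sum t) \<le> C * (1 + Sp t)^2"
    using eventually_M_rate_le by auto
  define K where "K = 9/4 * C / c"
  have sum_deriv: "((\<lambda>t. M t + K / G t) has_real_derivative M_rate (Sp t) (Sm t) (N_diff t) (N_sum t)
      + (0 * G t - K * G_rate (Sp t) (Sm t) (N_diff t) (N_sum t)) / (G t * G t)) (at t)" for t
    using G_pos[of t] by (intro DERIV_add M_deriv DERIV_divide DERIV_const G_deriv) simp
  \<comment> \<open>\<open>M' \<le> C (1 + Sp)\<^sup>2 \<le> (9/4) C / G\<^sup>2\<close> is compensated by \<open>(K / G)' = - K G' / G\<^sup>2\<close>\<close>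
  have sum_deriv_nonpos: "M_rate (Sp t) (Sm t) (N_diff t) (N_sum t)
      + (0 * G t - K * G_rate (Sp t) (Sm t) (N_diff t) (N_sum t)) / (G t * G t) \<le> 0"
    if "T \<le> t" for t
  proof -
    have "(1 + Sp t)^2 \<le> (3/2 / G t)^2"
      using one_plus_Sp_le[of t] Sp_bounds(1)[of t] by (intro power_mono) auto
    then have "C * (1 + Sp t)^2 \<le> C * (3/2 / G t)^2"
      using \<open>0 \<le> C\<close> by (rule mult_left_mono)
    also have "\<dots> = K * c / (G t * G t)"
      unfolding K_def using \<open>0 < c\<close> by (simp add: power2_eq_square)
    finally have "M_rate (Sp t) (Sm t) (N_diff t) (N_sum t) \<le> K * c / (G t * G t)"
      using M_rate[of t] \<open>0 \<le> T\<close> that by simp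
    also have "\<dots> \<le> K * G_rate (Sp t) (Sm t) (N_diff t) (N_sum t) / (G t * G t)"
      using G_rate[OF that] \<open>0 \<le> C\<close> \<open>0 < c\<close> unfolding K_def
      by (intro divide_right_mono mult_left_mono) auto
    finally show ?thesis by simp
  qed
  have "M t + K / G t \<le> M T + K / G T" if "T \<le> t" for t
    using deriv_le_imp_linear_upper_bound[OF sum_deriv sum_deriv_nonpos that] by simp
  moreover have "0 \<le> K" unfolding K_def using \<open>0 \<le> C\<close> \<open>0 < c\<close> by simp
  ultimately show ?thesis by blast
qed

lemma M_bdd_above: "bdd_above (range M)"
proof -
  obtain T K where "0 \<le> K" and antimono: "\<And>t. T \<le> t \<Longrightarrow> M t + K / G t \<le> M T + K / G T"
    using eventually_M_plus_K_div_G_antimono by auto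
  have K_div_G_nonneg: "0 \<le> K / G t" for t
    using G_pos[of t] \<open>0 \<le> K\<close> by simp
  have "M t \<le> M T + K / G T" for t
  proof (cases "t \<le> T")
    case True
    then show ?thesis using monoD[OF M_mono True] K_div_G_nonneg[of T] by linarith
  next
    case False
    then show ?thesis using antimono[of t] K_div_G_nonneg[of t] by linarith
  qed
  then show ?thesis by (rule bdd_aboveI2)
qed

lemma Sm_and_N_diff_tendsto_0: "(Sm \<longlongrightarrow> 0) at_top" "(N_diff \<longlongrightarrow> 0) at_top"
proof -
  have sqrt_tendsto: "((\<lambda>t. sqrt (k * (1 + Sp t))) \<longlongrightarrow> 0) at_top" for k
    using tendsto_real_sqrt[OF tendsto_mult[OF tendsto_const one_plus_Sp_tendsto_0, of k]] by simp
  have "\<forall>t. norm (Sm t) \<le> sqrt (2 * (1 + Sp t))"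
    using wh_constraint_bounds(1)[OF constraint] by (auto intro: real_le_rsqrt)
  from Lim_null_comparison[OF always_eventually[OF this] sqrt_tendsto]
  show "(Sm \<longlongrightarrow> 0) at_top" .
  have "\<forall>t. norm (N_diff t) \<le> sqrt (8/3 * (1 + Sp t))"
    using wh_constraint_bounds(2)[OF constraint] by (auto intro: real_le_rsqrt)
  from Lim_null_comparison[OF always_eventually[OF this] sqrt_tendsto]
  show "(N_diff \<longlongrightarrow> 0) at_top" .
qed

lemma N2_N3_tendsto_common_limit: "\<exists>n0>0. (N2 \<longlongrightarrow> n0) at_top \<and> (N3 \<longlongrightarrow> n0) at_top"
proof -
  define L where "L = (SUP t. M t)"
  have "(M \<longlongrightarrow> L) at_top"
    unfolding L_def by (rule mono_bdd_above_tendsto_SUP[OF M_mono M_bdd_above])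
  moreover have "\<forall>t. norm (W t) \<le> \<bar>Sm t\<bar>" using abs_W_le by simp
  from Lim_null_comparison[OF always_eventually[OF this]
      tendsto_rabs_zero[OF Sm_and_N_diff_tendsto_0(1)]]
  have "(W \<longlongrightarrow> 0) at_top" .
  ultimately have "((\<lambda>t. M t + W t / sqrt 3) \<longlongrightarrow> L + 0 / sqrt 3) at_top"
    by (intro tendsto_intros) auto
  then have "((\<lambda>t. ln (N2 t * N3 t)) \<longlongrightarrow> L) at_top" unfolding M_def by simp
  then have "((\<lambda>t. N2 t * N3 t) \<longlongrightarrow> exp L) at_top"
    using tendsto_exp N_product_pos by fastforce
  from tendsto_sqrt_of_product_and_difference[OF N2_pos N3_pos this Sm_and_N_diff_tendsto_0(2)]
  show ?thesis by (intro exI[of _ "sqrt (exp L)"]) simp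
qed

end

lemma WH_solution_N1_zero_imp_bianchi_VII0_solution:
  assumes "WH_solution N1 N2 N3 Sp Sm"
    and N1_zero: "\<forall>t. N1 t = 0"
    and "\<forall>t. N2 t > 0 \<and> N3 t > 0"
    and "\<forall>t. (Sm t)^2 + (N2 t - N3 t)^2 > 0"
  shows "bianchi_VII0_solution N2 N3 Sp Sm"
proof -
  have sol: "(N2 has_real_derivative (wh_q (Sp t) (Sm t) + 2 * Sp t + 2 * sqrt 3 * Sm t) * N2 t) (at t)
    \<and> (N3 has_real_derivative (wh_q (Sp t) (Sm t) + 2 * Sp t - 2 * sqrt 3 * Sm t) * N3 t) (at t)
    \<and> (Sp has_real_derivative - (2 - wh_q (Sp t) (Sm t)) * Sp t - 3 * wh_Splus 0 (N2 t) (N3 t)) (at t)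
    \<and> (Sm has_real_derivative - (2 - wh_q (Sp t) (Sm t)) * Sm t - 3 * wh_Sminus 0 (N2 t) (N3 t)) (at t)
    \<and> (Sp t)^2 + (Sm t)^2 + 3/4 * ((N2 t)^2 + (N3 t)^2 - 2 * (N2 t * N3 t)) = 1" for t
    using assms(1) N1_zero unfolding WH_solution_def Let_def by simp
  have constraint: "Sp t^2 + Sm t^2 + 3/4 * (N2 t - N3 t)^2 = 1" for t
    using sol[of t] by (simp add: power2_eq_square algebra_simps)
  then have q: "wh_q (Sp t) (Sm t) = 2 - 3/2 * (N2 t - N3 t)^2" for t
    unfolding wh_q_def by (simp add: field_simps)
  show ?thesis
  proof
    fix t
    show "(N2 has_real_derivative
        (2 - 3/2 * (N2 t - N3 t)^2 + 2 * Sp t + 2 * sqrt 3 * Sm t) * N2 t) (at t)"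
      using sol[of t] unfolding q by blast
    show "(N3 has_real_derivative
        (2 - 3/2 * (N2 t - N3 t)^2 + 2 * Sp t - 2 * sqrt 3 * Sm t) * N3 t) (at t)"
      using sol[of t] unfolding q by blast
    show "(Sp has_real_derivative - 3/2 * (N2 t - N3 t)^2 * (1 + Sp t)) (at t)"
      using sol[of t] by (elim conjE DERIV_cong) (simp add: q wh_Splus_def algebra_simps)
    show "(Sm has_real_derivative
        - 3/2 * (N2 t - N3 t)^2 * Sm t - 3 * sqrt 3 / 2 * (N2 t - N3 t) * (N2 t + N3 t)) (at t)"
      using sol[of t] by (elim conjE DERIV_cong) (simp add: q wh_Sminus_def algebra_simps)
  qed (use assms(3,4) constraint in auto)
qed

theorem mainTheorem9:
  fixes N1 N2 N3 Sp Sm :: "real \<Rightarrow> real"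
  assumes "WH_solution N1 N2 N3 Sp Sm"
    and "\<forall>t. N1 t = 0"
    and "\<forall>t. N2 t > 0 \<and> N3 t > 0"
    and "\<forall>t. (Sm t)^2 + (N2 t - N3 t)^2 > 0"
  shows "\<exists>n0 > 0. (N2 \<longlongrightarrow> n0) at_top \<and> (N3 \<longlongrightarrow> n0) at_top"
proof -
  interpret bianchi_VII0_solution N2 N3 Sp Sm
    using assms by (rule WH_solution_N1_zero_imp_bianchi_VII0_solution)
  show ?thesis by (rule N2_N3_tendsto_common_limit)
qed

end
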